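(* Let $I\subset\mathbb{R}$ be an interval, $n\in\mathbb{N}$ and let $f:I\to\mathbb{R}$ be $n$-convex. Fix $k\in\mathbb{N}$ with $k\le n$ and points $x_1<\dots<x_k$ in $I$. Assign to each $x_j$ a multiplicity $l_j\in\mathbb{N}$ ($j=1,\dots,k$) such that $l_1+\dots+l_k=n+1$, and such that $l_1=1$ if $x_1=\inf I$, and $l_k=1$ if $x_k=\sup I$. Let $I_0=(-\infty,x_1)$, $I_j=(x_j,x_{j+1})$ for $j=1,\dots,k-1$, and $I_k=(x_k,\infty)$. Then there exists a polynomial $p\in\Pi_n$ such that $p(x_j)=f(x_j)$ for $j=1,\dots,k$ and $(-1)^{n+1}\bigl(f(x)-p(x)\bigr)\ge 0$ for $x\in I_0\cap I$; $(-1)^{n+1-(l_1+\dots+l_j)}\bigl(f(x)-p(x)\bigr)\ge 0$ for $x\in I_j$, $j=1,\dots,k-1$; $f(x)-p(x)\ge 0$ for $x\in I_k\cap I$.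
   Context: $\Pi_n$ denotes the set of real polynomials of degree at most $n$. Divided differences are defined recursively by $[x_1;f]:=f(x_1)$ and $[x_1,\dots,x_{m+1};f]:=\frac{[x_2,\dots,x_{m+1};f]-[x_1,\dots,x_m;f]}{x_{m+1}-x_1}$ for pairwise distinct points. For $n\in\mathbb{N}$, a function $f:I\to\mathbb{R}$ is called $n$-convex if $[x_1,\dots,x_{n+2};f]\ge 0$ for all pairwise distinct $x_1,\dots,x_{n+2}\in I$. *)

theory Defs
  imports "HOL-Analysis.Analysis" "HOL-Computational_Algebra.Polynomial"
begin

text \<open>The empty list gets the junk value 0 (never used).\<close>
fun divdiff :: "(real \<Rightarrow> real) \<Rightarrow> real list \<Rightarrow> real" where
  "divdiff f [] = 0"
| "divdiff f [x] = f x"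
| "divdiff f (x # y # zs) =
     (divdiff f (y # zs) - divdiff f (butlast (x # y # zs))) / (last (y # zs) - x)"

definition n_convex :: "nat \<Rightarrow> real set \<Rightarrow> (real \<Rightarrow> real) \<Rightarrow> bool" where
  "n_convex n I f \<longleftrightarrow>
     (\<forall>xs. length xs = n + 2 \<longrightarrow> distinct xs \<longrightarrow> set xs \<subseteq> I \<longrightarrow> divdiff f xs \<ge> 0)"

end

theory Submission
  imports Defs "HOL-Library.Multiset"
begin

text \<open>
  The nodes counted with multiplicity form a multiset M, and
  \<open>\<omega>(y) = (\<Prod>a\<in>#M. y - a)\<close>; the stated sign conditions are exactly
  \<open>\<omega>(y) (f y - p y) \<ge> 0\<close> read off on the gaps between the nodes.

  Pick a node a. The slope
  \<open>y \<mapsto> (f y - f a) / (y - a)\<close> is (n-1)-convex on \<open>I - {a}\<close>, because its divided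
  differences are those of f with a added as a node. A simple node is dropped.
  A multiple node lies in the interior of I, and there the slope extends across a by
  its right limit, which exists because divided differences of an (n-1)-convex
  function are monotone in each node. If q interpolates the slope at the remaining
  nodes with the right sign \<open>\<omega>'\<close>, then \<open>p = f a + (y - a) q\<close> satisfies
  \<open>\<omega>(y) (f y - p y) = (y - a)\<^sup>2 \<omega>'(y) (slope y - q y) \<ge> 0\<close>.
\<close>

text \<open>Lagrange form of the divided difference: symmetric in the nodes, hence a function
  of the set of nodes.\<close>

definition divdiff_set :: "(real \<Rightarrow> real) \<Rightarrow> real set \<Rightarrow> real" where
  "divdiff_set f A = (\<Sum>x\<in>A. f x / (\<Prod>y\<in>A - {x}. x - y))"

definition slope :: "(real \<Rightarrow> real) \<Rightarrow> real \<Rightarrow> real \<Rightarrow> real" where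
  "slope f a y = (f y - f a) / (y - a)"

lemma divdiff_set_singleton [simp]: "divdiff_set f {a} = f a"
  by (simp add: divdiff_set_def)

lemma divdiff_set_cong: "(\<And>x. x \<in> A \<Longrightarrow> f x = g x) \<Longrightarrow> divdiff_set f A = divdiff_set g A"
  unfolding divdiff_set_def by (rule sum.cong) auto

lemma prod_node_diff_remove:
  assumes "finite A" "b \<in> A" "x \<in> A" "x \<noteq> b"
  shows "(\<Prod>y\<in>A - {x}. x - y) = (x - b) * (\<Prod>y\<in>A - {b} - {x}. x - y)"
proof -
  have "A - {x} = insert b (A - {b} - {x})" using assms by auto
  then show ?thesis using assms(1) by simp
qed

lemma divdiff_set_Diff_as_sum:
  assumes "finite A" "b \<in> A"
  shows "(\<Sum>x\<in>A. f x * (x - b) / (\<Prod>y\<in>A - {x}. x - y)) = divdiff_set f (A - {b})"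
proof -
  have "(\<Sum>x\<in>A. f x * (x - b) / (\<Prod>y\<in>A - {x}. x - y))
      = (\<Sum>x\<in>A - {b}. f x * (x - b) / (\<Prod>y\<in>A - {x}. x - y))"
    using assms by (simp add: sum.remove)
  also have "\<dots> = divdiff_set f (A - {b})"
    unfolding divdiff_set_def
  proof (rule sum.cong)
    fix x assume "x \<in> A - {b}"
    then show "f x * (x - b) / (\<Prod>y\<in>A - {x}. x - y) = f x / (\<Prod>y\<in>A - {b} - {x}. x - y)"
      using assms by (simp add: prod_node_diff_remove)
  qed simp
  finally show ?thesis .
qed

lemma divdiff_set_rec:
  assumes "finite A" "a \<in> A" "b \<in> A" "a \<noteq> b"
  shows "divdiff_set f A = (divdiff_set f (A - {b}) - divdiff_set f (A - {a})) / (a - b)"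
proof -
  have "(a - b) * divdiff_set f A
      = (\<Sum>x\<in>A. f x * (x - b) / (\<Prod>y\<in>A - {x}. x - y) - f x * (x - a) / (\<Prod>y\<in>A - {x}. x - y))"
    unfolding divdiff_set_def sum_distrib_left by (rule sum.cong) (simp_all add: algebra_simps diff_divide_distrib)
  also have "\<dots> = divdiff_set f (A - {b}) - divdiff_set f (A - {a})"
    using assms by (simp add: sum_subtractf divdiff_set_Diff_as_sum)
  finally show ?thesis using assms(4) by (simp add: field_simps)
qed

lemma divdiff_set_insert:
  assumes "finite B" "a \<notin> B"
  shows "divdiff_set f (insert a B)
    = f a / (\<Prod>y\<in>B. a - y) + (\<Sum>x\<in>B. f x / ((x - a) * (\<Prod>y\<in>B - {x}. x - y)))"
proof -
  have "(\<Prod>y\<in>insert a B - {x}. x - y) = (x - a) * (\<Prod>y\<in>B - {x}. x - y)" if "x \<in> B" for x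
  proof -
    have "insert a B - {x} = insert a (B - {x})" using that assms by auto
    then show ?thesis using assms by simp
  qed
  moreover have "insert a B - {a} = B" using assms by auto
  ultimately show ?thesis unfolding divdiff_set_def using assms by simp
qed

lemma divdiff_set_insert_slope:
  assumes "finite B" "B \<noteq> {}" "a \<notin> B"
  shows "divdiff_set f (insert a B) = divdiff_set (slope f a) B"
proof -
  obtain n where "card B = Suc n" using assms by (metis card_gt_0_iff gr0_implies_Suc)
  then show ?thesis using assms
  proof (induction n arbitrary: B)
    case 0
    then obtain b where B: "B = {b}" by (auto simp: card_Suc_eq)
    have "a \<noteq> b" using B 0 by auto
    have "{a, b} - {b} = {a}" "{a, b} - {a} = {b}" using \<open>a \<noteq> b\<close> by auto
    then have "divdiff_set f {a, b} = (f a - f b) / (a - b)"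
      using divdiff_set_rec[of "{a, b}" a b f] \<open>a \<noteq> b\<close> by simp
    also have "\<dots> = slope f a b" unfolding slope_def using \<open>a \<noteq> b\<close> by (simp add: field_simps)
    finally show ?case using B by simp
  next
    case (Suc n)
    obtain b b' where bb': "b \<in> B" "b' \<in> B" "b \<noteq> b'"
      using Suc.prems(1)
      by (metis card_le_Suc_iff insertCI le_refl)
    have B': "card (B - {b}) = Suc n" "card (B - {b'}) = Suc n" "B - {b} \<noteq> {}" "B - {b'} \<noteq> {}"
      using Suc.prems bb' by auto
    have "insert a B - {b'} = insert a (B - {b'})" "insert a B - {b} = insert a (B - {b})"
      using Suc.prems bb' by auto
    then have "divdiff_set f (insert a B)
        = (divdiff_set f (insert a (B - {b'})) - divdiff_set f (insert a (B - {b}))) / (b - b')"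
      using divdiff_set_rec[of "insert a B" b b' f] Suc.prems bb' by simp
    also have "\<dots> = divdiff_set (slope f a) B"
      using Suc.IH[of "B - {b}"] Suc.IH[of "B - {b'}"] B' Suc.prems bb'
        divdiff_set_rec[of B b b' "slope f a"] by simp
    finally show ?case .
  qed
qed

lemma divdiff_eq_divdiff_set:
  "distinct xs \<Longrightarrow> xs \<noteq> [] \<Longrightarrow> divdiff f xs = divdiff_set f (set xs)"
proof (induction f xs rule: divdiff.induct)
  case (3 f x y zs)
  let ?xs = "x # y # zs" and ?z = "last (y # zs)"
  have split: "?xs = butlast ?xs @ [?z]"
    using append_butlast_last_id[of ?xs] by simp
  then have "distinct (butlast ?xs @ [?z])"
    using "3.prems"(1) by simp
  then have "set (butlast ?xs) = set ?xs - {?z}"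
    by (subst (2) split) auto
  moreover have "?z \<in> set (y # zs)"
    by (rule last_in_set) simp
  then have "?z \<noteq> x" and "set (y # zs) = set ?xs - {x}"
    using "3.prems"(1) by auto
  moreover have "distinct (butlast ?xs)"
    using "3.prems"(1) distinct_butlast by blast
  ultimately show ?case
    using 3 divdiff_set_rec[of "set ?xs" ?z x f] by simp
qed simp_all

lemma n_convex_iff_divdiff_set:
  "n_convex n I f \<longleftrightarrow> (\<forall>A\<subseteq>I. card A = n + 2 \<longrightarrow> 0 \<le> divdiff_set f A)"
proof
  assume conv: "n_convex n I f"
  show "\<forall>A\<subseteq>I. card A = n + 2 \<longrightarrow> 0 \<le> divdiff_set f A"
  proof (intro allI impI)
    fix A assume A: "A \<subseteq> I" "card A = n + 2"
    then have "finite A" by (intro card_ge_0_finite) simp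
    let ?xs = "sorted_list_of_set A"
    have "set ?xs = A" "distinct ?xs" "length ?xs = n + 2"
      using \<open>finite A\<close> A by auto
    moreover from this have "?xs \<noteq> []" by auto
    ultimately show "0 \<le> divdiff_set f A"
      using conv A divdiff_eq_divdiff_set[of ?xs f] unfolding n_convex_def by metis
  qed
next
  assume conv: "\<forall>A\<subseteq>I. card A = n + 2 \<longrightarrow> 0 \<le> divdiff_set f A"
  show "n_convex n I f"
    unfolding n_convex_def
  proof (intro allI impI)
    fix xs :: "real list" assume "length xs = n + 2" "distinct xs" "set xs \<subseteq> I"
    moreover from this have "xs \<noteq> []" "card (set xs) = n + 2" by (auto simp: distinct_card)
    ultimately show "0 \<le> divdiff f xs"
      using conv divdiff_eq_divdiff_set[of xs f] by simp
  qed
qed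

lemma n_convex_slope:
  assumes "n_convex (Suc m) I f" "a \<in> I"
  shows "n_convex m (I - {a}) (slope f a)"
  unfolding n_convex_iff_divdiff_set
proof (intro allI impI)
  fix A assume A: "A \<subseteq> I - {a}" "card A = m + 2"
  then have "finite A" "A \<noteq> {}" by (auto intro: card_ge_0_finite)
  with A have "divdiff_set f (insert a A) = divdiff_set (slope f a) A"
    by (auto intro: divdiff_set_insert_slope)
  moreover have "insert a A \<subseteq> I" "card (insert a A) = Suc m + 2"
    using A assms \<open>finite A\<close> by (auto simp: subset_Diff_insert)
  ultimately show "0 \<le> divdiff_set (slope f a) A"
    using assms(1) unfolding n_convex_iff_divdiff_set by metis
qed

lemma divdiff_set_insert_mono:
  assumes conv: "n_convex m S g" and Z: "finite Z" "card Z = m" "Z \<subseteq> S"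
    and y: "y \<in> S - Z" "y' \<in> S - Z" "y \<le> y'"
  shows "divdiff_set g (insert y Z) \<le> divdiff_set g (insert y' Z)"
proof (cases "y = y'")
  case False
  define A where "A = insert y (insert y' Z)"
  have "finite A" "card A = m + 2" "A \<subseteq> S" "y \<in> A" "y' \<in> A"
    using Z y False by (auto simp: A_def)
  then have "0 \<le> divdiff_set g A"
    using conv unfolding n_convex_iff_divdiff_set by blast
  moreover have "A - {y} = insert y' Z" "A - {y'} = insert y Z"
    using y False by (auto simp: A_def)
  ultimately have "0 \<le> (divdiff_set g (insert y' Z) - divdiff_set g (insert y Z)) / (y' - y)"
    using divdiff_set_rec[of A y' y g] \<open>finite A\<close> \<open>y \<in> A\<close> \<open>y' \<in> A\<close> False by simp
  then show ?thesis using y False by (simp add: zero_le_divide_iff)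
qed simp

lemma eventually_not_in_finite:
  "finite (B :: 'a :: t1_space set) \<Longrightarrow> a \<notin> B \<Longrightarrow> eventually (\<lambda>y. y \<notin> B) (at a within T)"
  unfolding eventually_at_topological
  by (intro exI[of _ "- B"]) (auto intro: finite_imp_closed)

lemma tendsto_divdiff_set_insert:
  assumes B: "finite B" "a \<notin> B" and g: "(g \<longlongrightarrow> c) (at a within T)"
  shows "((\<lambda>y. divdiff_set g (insert y B)) \<longlongrightarrow> divdiff_set (g(a := c)) (insert a B))
    (at a within T)"
proof -
  let ?S = "\<lambda>y. \<Sum>x\<in>B. g x / ((x - y) * (\<Prod>w\<in>B - {x}. x - w))"
  have "eventually (\<lambda>y. divdiff_set g (insert y B) = g y / (\<Prod>z\<in>B. y - z) + ?S y) (at a within T)"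
    using eventually_not_in_finite[OF B] by eventually_elim (simp add: divdiff_set_insert B)
  moreover have "divdiff_set (g(a := c)) (insert a B) = c / (\<Prod>z\<in>B. a - z) + ?S a"
    using B by (simp add: divdiff_set_insert) (intro sum.cong; auto)
  moreover have "((\<lambda>y. g y / (\<Prod>z\<in>B. y - z) + ?S y) \<longlongrightarrow> c / (\<Prod>z\<in>B. a - z) + ?S a) (at a within T)"
    using B by (intro tendsto_intros g) auto
  ultimately show ?thesis by (simp add: tendsto_cong)
qed

lemma tendsto_of_tendsto_divdiff_set_insert:
  assumes B: "finite B" "a \<notin> B"
    and lim: "((\<lambda>y. divdiff_set g (insert y B)) \<longlongrightarrow> L) (at a within T)"
  shows "\<exists>c. (g \<longlongrightarrow> c) (at a within T)"
proof -
  let ?S = "\<lambda>y. \<Sum>x\<in>B. g x / ((x - y) * (\<Prod>w\<in>B - {x}. x - w))"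
  have "eventually (\<lambda>y. g y = (\<Prod>z\<in>B. y - z) * (divdiff_set g (insert y B) - ?S y)) (at a within T)"
    using eventually_not_in_finite[OF B] by eventually_elim (simp add: divdiff_set_insert B)
  moreover have "((\<lambda>y. (\<Prod>z\<in>B. y - z) * (divdiff_set g (insert y B) - ?S y))
      \<longlongrightarrow> (\<Prod>z\<in>B. a - z) * (L - ?S a)) (at a within T)"
    using B by (intro tendsto_intros lim) auto
  ultimately show ?thesis by (auto simp: tendsto_cong)
qed

text \<open>For fixed Z, \<open>y \<mapsto> divdiff_set g (insert y Z)\<close> is nondecreasing and, on the right
  of a, bounded below by its value at a point left of a; so it has a right limit at a,
  and by the Newton form \<open>divdiff_set_insert\<close> so does g.\<close>

lemma n_convex_right_limit:
  assumes conv: "n_convex m (S - {a}) g" and a: "a \<in> interior S"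
  obtains c where "(g \<longlongrightarrow> c) (at_right a)"
proof -
  obtain e where "e > 0" "ball a e \<subseteq> S"
    using a unfolding mem_interior by blast
  then have left: "{a - e<..<a} \<subseteq> S - {a}" and right: "{a<..<a + e} \<subseteq> S - {a}"
    by (auto simp: ball_eq_greaterThanLessThan)
  obtain Z where Z: "finite Z" "card Z = m" "Z \<subseteq> {a - e<..<a}"
    using infinite_arbitrarily_large[of "{a - e<..<a}" m] \<open>e > 0\<close> by auto
  obtain y0 where y0: "y0 \<in> {a - e<..<a} - Z"
  proof -
    have "infinite ({a - e<..<a} - Z)"
      using Diff_infinite_finite[OF Z(1)] \<open>e > 0\<close> by simp
    then show ?thesis using that infinite_imp_nonempty by blast
  qed
  let ?R = "{a<..<a + e}"
  let ?\<phi> = "\<lambda>y. divdiff_set g (insert y Z)"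
  have ZS: "Z \<subseteq> S - {a}" using Z left by auto
  have R: "y \<in> S - {a} - Z" if "y \<in> ?R" for y
    using that right Z(3) by auto
  have mono: "?\<phi> y \<le> ?\<phi> y'" if "y \<in> S - {a} - Z" "y' \<in> S - {a} - Z" "y \<le> y'" for y y'
    using divdiff_set_insert_mono[OF conv Z(1,2) ZS] that by blast
  have F: "at a within ({a<..} \<inter> ?R) = at_right a"
    by (rule at_within_nhd[of a "{..<a + e}"]) (use \<open>e > 0\<close> in auto)
  have "(?\<phi> \<longlongrightarrow> Inf (?\<phi> ` ({a<..} \<inter> ?R))) (at_right a)"
    unfolding F[symmetric]
  proof (rule Lim_right_bound)
    show "?\<phi> y \<le> ?\<phi> y'" if "y \<in> ?R" "y' \<in> ?R" "a < y" "y \<le> y'" for y y'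
      using that R by (intro mono) auto
    show "?\<phi> y0 \<le> ?\<phi> y" if "y \<in> ?R" "a < y" for y
      using that y0 left R by (intro mono) auto
  qed
  moreover have "a \<notin> Z" using Z(3) by auto
  ultimately show ?thesis
    using tendsto_of_tendsto_divdiff_set_insert[OF Z(1)] that by blast
qed

lemma n_convex_fun_upd_limit:
  assumes conv: "n_convex m (S - {a}) g" and c: "(g \<longlongrightarrow> c) (at_right a)"
    and S: "eventually (\<lambda>y. y \<in> S) (at_right a)"
  shows "n_convex m S (g(a := c))"
  unfolding n_convex_iff_divdiff_set
proof (intro allI impI)
  fix A assume A: "A \<subseteq> S" "card A = m + 2"
  then have "finite A" by (intro card_ge_0_finite) simp
  show "0 \<le> divdiff_set (g(a := c)) A"
  proof (cases "a \<in> A")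
    case False
    then have "divdiff_set (g(a := c)) A = divdiff_set g A"
      by (intro divdiff_set_cong) auto
    moreover have "A \<subseteq> S - {a}" using A False by auto
    ultimately show ?thesis
      using conv A(2) unfolding n_convex_iff_divdiff_set by simp
  next
    case True
    define B where "B = A - {a}"
    have B: "finite B" "a \<notin> B" "A = insert a B" "B \<subseteq> S - {a}" "card B = m + 1"
      using A \<open>finite A\<close> True by (auto simp: B_def)
    have lim: "((\<lambda>y. divdiff_set g (insert y B)) \<longlongrightarrow> divdiff_set (g(a := c)) A) (at_right a)"
      unfolding \<open>A = insert a B\<close> using B(1,2) c by (rule tendsto_divdiff_set_insert)
    have "eventually (\<lambda>y. y \<in> S \<and> a < y \<and> y \<notin> B) (at_right a)"
      using S eventually_at_right_less eventually_not_in_finite[OF B(1,2)]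
      by (simp add: eventually_conj_iff)
    then have "eventually (\<lambda>y. 0 \<le> divdiff_set g (insert y B)) (at_right a)"
    proof (rule eventually_mono)
      fix y assume "y \<in> S \<and> a < y \<and> y \<notin> B"
      then have "insert y B \<subseteq> S - {a}" "card (insert y B) = m + 2"
        using B(1,4,5) by auto
      then show "0 \<le> divdiff_set g (insert y B)"
        using conv unfolding n_convex_iff_divdiff_set by blast
    qed
    then show ?thesis by (rule tendsto_lowerbound[OF lim]) simp
  qed
qed

lemma n_convex_extend_interior:
  assumes conv: "n_convex m (S - {a}) g" and a: "a \<in> interior S"
  obtains c where "n_convex m S (g(a := c))"
proof -
  obtain c where "(g \<longlongrightarrow> c) (at_right a)"
    using n_convex_right_limit[OF conv a] .
  moreover have "eventually (\<lambda>y. y \<in> interior S) (at a)"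
    using a by (intro eventually_at_in_open') simp_all
  then have "eventually (\<lambda>y. y \<in> interior S) (at_right a)"
    by (rule filter_leD[OF at_le, rotated]) simp
  then have "eventually (\<lambda>y. y \<in> S) (at_right a)"
    by (rule eventually_mono) (use interior_subset in blast)
  ultimately show ?thesis
    using n_convex_fun_upd_limit[OF conv] that by blast
qed

lemma interpolation_add_node:
  fixes M :: "real multiset" and q :: "real poly"
  assumes q: "\<forall>b\<in>#M. b \<noteq> a \<longrightarrow> poly q b = slope f a b"
    and sign: "\<forall>y\<in>I - {a}. 0 \<le> (\<Prod>b\<in>#M. y - b) * (slope f a y - poly q y)"
  defines "p \<equiv> [:f a:] + [:-a, 1:] * q"
  shows "\<forall>b\<in>#add_mset a M. poly p b = f b"
    and "\<forall>y\<in>I. 0 \<le> (\<Prod>b\<in>#add_mset a M. y - b) * (f y - poly p y)"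
proof -
  have p: "poly p y = f a + (y - a) * poly q y" for y
    by (simp add: p_def algebra_simps)
  have f: "f y - poly p y = (y - a) * (slope f a y - poly q y)" if "y \<noteq> a" for y
    using that by (simp add: p slope_def field_simps)
  show "\<forall>b\<in>#add_mset a M. poly p b = f b"
  proof
    fix b assume "b \<in># add_mset a M"
    then show "poly p b = f b"
      using q by (cases "b = a") (auto simp: p slope_def)
  qed
  show "\<forall>y\<in>I. 0 \<le> (\<Prod>b\<in>#add_mset a M. y - b) * (f y - poly p y)"
  proof
    fix y assume "y \<in> I"
    show "0 \<le> (\<Prod>b\<in>#add_mset a M. y - b) * (f y - poly p y)"
    proof (cases "y = a")
      case False
      then have "(\<Prod>b\<in>#add_mset a M. y - b) * (f y - poly p y)
          = (y - a)\<^sup>2 * ((\<Prod>b\<in>#M. y - b) * (slope f a y - poly q y))"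
        by (simp add: f power2_eq_square)
      also have "\<dots> \<ge> 0"
        using sign \<open>y \<in> I\<close> False by simp
      finally show ?thesis .
    qed simp
  qed
qed

lemma n_convex_slope_reduction:
  fixes M :: "real multiset"
  assumes conv: "n_convex (Suc n) I f"
    and nodes: "set_mset (add_mset a M) \<subseteq> I"
    and interior: "\<forall>b\<in>#add_mset a M. 2 \<le> count (add_mset a M) b \<longrightarrow> b \<in> interior I"
  obtains I' g where "n_convex n I' g" "I - {a} \<subseteq> I'" "set_mset M \<subseteq> I'"
    "\<forall>b\<in>#M. 2 \<le> count M b \<longrightarrow> b \<in> interior I'" "\<forall>y\<in>I - {a}. g y = slope f a y"
proof (cases "a \<in># M")
  case True
  have "n_convex n (I - {a}) (slope f a)"
    using conv nodes by (intro n_convex_slope) auto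
  moreover have "a \<in> interior I"
  proof -
    have "2 \<le> count (add_mset a M) a"
      using True by (simp add: Suc_le_eq)
    then show ?thesis using interior by simp
  qed
  ultimately obtain c where "n_convex n I ((slope f a)(a := c))"
    by (rule n_convex_extend_interior)
  moreover have "\<forall>b\<in>#M. 2 \<le> count M b \<longrightarrow> b \<in> interior I"
  proof (intro ballI impI)
    fix b assume "b \<in># M" "2 \<le> count M b"
    then have "b \<in># add_mset a M" "2 \<le> count (add_mset a M) b" by auto
    then show "b \<in> interior I" using interior by blast
  qed
  ultimately show ?thesis
    using that nodes by auto
next
  case False
  have "interior (I - {a}) = interior I - {a}"
    by (simp add: interior_diff)
  moreover have "count (add_mset a M) b = count M b" if "b \<in># M" for b
    using that False by auto
  ultimately have "\<forall>b\<in>#M. 2 \<le> count M b \<longrightarrow> b \<in> interior (I - {a})"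
    using interior False by auto
  moreover have "n_convex n (I - {a}) (slope f a)"
    using conv nodes by (intro n_convex_slope) auto
  ultimately show ?thesis
    using that nodes False by auto
qed

theorem n_convex_interpolant_sign:
  fixes M :: "real multiset"
  assumes "n_convex n I f" "size M = Suc n" "set_mset M \<subseteq> I"
    and "\<forall>a\<in>#M. 2 \<le> count M a \<longrightarrow> a \<in> interior I"
  shows "\<exists>p. degree p \<le> n \<and> (\<forall>a\<in>#M. poly p a = f a)
    \<and> (\<forall>y\<in>I. 0 \<le> (\<Prod>a\<in>#M. y - a) * (f y - poly p y))"
  using assms
proof (induction n arbitrary: f I M)
  case 0
  then obtain a where M: "M = add_mset a {#}"
    using size_1_singleton_mset[of M] by auto
  have "0 \<le> slope f a y" if "y \<in> I - {a}" for y
  proof -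
    have "card {a, y} = 0 + 2" "{a, y} \<subseteq> I" using that 0 M by auto
    then have "0 \<le> divdiff_set f (insert a {y})"
      using "0.prems"(1) unfolding n_convex_iff_divdiff_set by blast
    then show ?thesis using that divdiff_set_insert_slope[of "{y}" a f] by simp
  qed
  then have "\<forall>y\<in>I - {a}. 0 \<le> (\<Prod>b\<in>#{#}. y - b) * (slope f a y - poly 0 y)"
    by simp
  from interpolation_add_node[OF _ this] have
    "\<forall>b\<in>#M. poly [:f a:] b = f b" "\<forall>y\<in>I. 0 \<le> (\<Prod>b\<in>#M. y - b) * (f y - poly [:f a:] y)"
    unfolding M by simp_all
  then show ?case by (intro exI[of _ "[:f a:]"]) simp
next
  case (Suc n)
  then obtain a M' where M: "M = add_mset a M'"
    by (metis size_eq_Suc_imp_eq_union)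
  obtain I' g where g: "n_convex n I' g" "I - {a} \<subseteq> I'" "set_mset M' \<subseteq> I'"
    "\<forall>b\<in>#M'. 2 \<le> count M' b \<longrightarrow> b \<in> interior I'" "\<forall>y\<in>I - {a}. g y = slope f a y"
    using n_convex_slope_reduction[of n I f a M'] Suc.prems unfolding M by blast
  moreover have "size M' = Suc n"
    using Suc.prems(2) M by simp
  ultimately obtain q where q: "degree q \<le> n" "\<forall>b\<in>#M'. poly q b = g b"
    "\<forall>y\<in>I'. 0 \<le> (\<Prod>b\<in>#M'. y - b) * (g y - poly q y)"
    using Suc.IH by blast
  have "\<forall>b\<in>#M'. b \<noteq> a \<longrightarrow> poly q b = slope f a b"
    using q(2) g(5) Suc.prems(3) M by auto
  moreover have "\<forall>y\<in>I - {a}. 0 \<le> (\<Prod>b\<in>#M'. y - b) * (slope f a y - poly q y)"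
  proof
    fix y assume y: "y \<in> I - {a}"
    then have "y \<in> I'" using g(2) by blast
    then show "0 \<le> (\<Prod>b\<in>#M'. y - b) * (slope f a y - poly q y)"
      using q(3) g(5) y by (metis (no_types, lifting))
  qed
  ultimately have "\<forall>b\<in>#M. poly ([:f a:] + [:-a, 1:] * q) b = f b"
    "\<forall>y\<in>I. 0 \<le> (\<Prod>b\<in>#M. y - b) * (f y - poly ([:f a:] + [:-a, 1:] * q) y)"
    unfolding M by (rule interpolation_add_node)+
  moreover have "degree ([:-a, 1:] * q) \<le> Suc n"
    using degree_mult_le[of "[:-a, 1:]" q] q(1) by simp
  then have "degree ([:f a:] + [:-a, 1:] * q) \<le> Suc n"
    by (intro degree_add_le) simp_all
  ultimately show ?case by blast
qed

lemma prod_mset_pos: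
  "(\<And>b. b \<in># M \<Longrightarrow> 0 < h b) \<Longrightarrow> 0 < (\<Prod>b\<in>#M. h b :: 'a :: linordered_semidom)"
  by (induction M) auto

lemma sum_atLeastAtMost_split:
  fixes f :: "nat \<Rightarrow> 'a :: comm_monoid_add"
  assumes "j \<le> k"
  shows "(\<Sum>i=1..k. f i) = (\<Sum>i=1..j. f i) + (\<Sum>i=Suc j..k. f i)"
proof -
  have "{1..k} = {1..j} \<union> {Suc j..k}" using assms by auto
  then show ?thesis by (simp add: sum.union_disjoint[symmetric] ivl_disj_int)
qed

lemma sign_of_node_product:
  fixes L R :: "real multiset"
  assumes "0 \<le> (\<Prod>b\<in>#L + R. y - b) * d" "\<forall>b\<in>#L. b < y" "\<forall>b\<in>#R. y < b"
  shows "0 \<le> (-1) ^ size R * d"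
proof -
  have "(-1) ^ size R * (\<Prod>b\<in>#R. y - b) = (\<Prod>b\<in>#R. b - y)"
    by (induction R) (auto simp: algebra_simps)
  then have "0 < (-1) ^ size R * (\<Prod>b\<in>#L + R. y - b)"
    using assms(2,3) by (simp add: mult.left_commute prod_mset_pos)
  moreover have "0 \<le> ((-1) ^ size R * (\<Prod>b\<in>#L + R. y - b)) * ((-1) ^ size R * d)"
    using assms(1) by (simp add: algebra_simps power_mult_distrib[symmetric])
  ultimately show ?thesis by (simp add: zero_le_mult_iff)
qed

lemma sign_between_nodes:
  fixes x :: "nat \<Rightarrow> real"
  assumes "0 \<le> (\<Prod>b\<in>#(\<Sum>i\<in>{1..k}. replicate_mset (l i) (x i)). y - b) * d" "j \<le> k"
    and "\<forall>i\<in>{1..j}. x i < y" "\<forall>i\<in>{Suc j..k}. y < x i"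
  shows "0 \<le> (-1) ^ (\<Sum>i=Suc j..k. l i) * d"
proof -
  define L where "L = (\<Sum>i\<in>{1..j}. replicate_mset (l i) (x i))"
  define R where "R = (\<Sum>i\<in>{Suc j..k}. replicate_mset (l i) (x i))"
  have "(\<Sum>i\<in>{1..k}. replicate_mset (l i) (x i)) = L + R"
    unfolding L_def R_def using \<open>j \<le> k\<close> by (rule sum_atLeastAtMost_split)
  with assms(1) have "0 \<le> (\<Prod>b\<in>#L + R. y - b) * d" by simp
  moreover have "\<forall>b\<in>#L. b < y" "\<forall>b\<in>#R. y < b"
    using assms(3,4) by (auto simp: L_def R_def set_mset_sum split: if_splits)
  ultimately have "0 \<le> (-1) ^ size R * d"
    by (rule sign_of_node_product)
  then show ?thesis by (simp add: R_def)
qed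

lemma mem_interior_is_interval:
  fixes I :: "real set"
  assumes "is_interval I" "u \<in> I" "v \<in> I" "u < x" "x < v"
  shows "x \<in> interior I"
proof -
  have "{u<..<v} \<subseteq> I"
  proof
    fix t assume "t \<in> {u<..<v}"
    then show "t \<in> I"
      using assms(1-3) unfolding is_interval_1 by (meson greaterThanLessThan_iff less_imp_le)
  qed
  then have "{u<..<v} \<subseteq> interior I"
    by (rule interior_maximal) simp
  then show ?thesis
    using assms(4,5) by auto
qed

lemma chain_less:
  fixes x :: "nat \<Rightarrow> 'a :: order"
  assumes chain: "\<forall>j\<in>{1..<k}. x j < x (Suc j)" and "1 \<le> i" "i < j" "j \<le> k"
  shows "x i < x j"
  using assms(3,4)
proof (induction j)
  case (Suc j)
  then have "x j < x (Suc j)"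
    using chain \<open>1 \<le> i\<close> by simp
  then show ?case
    using Suc by (cases "i = j") (auto intro: less_trans)
qed simp

lemma count_sum_replicate_mset:
  assumes "finite A" "inj_on x A" "j \<in> A"
  shows "count (\<Sum>i\<in>A. replicate_mset (l i) (x i)) (x j) = l j"
proof -
  have "count (\<Sum>i\<in>A. replicate_mset (l i) (x i)) (x j) = (\<Sum>i\<in>A. if i = j then l i else 0)"
    unfolding count_sum using assms(2,3) by (intro sum.cong) (auto dest: inj_onD)
  then show ?thesis
    using assms(1,3) by simp
qed

lemma chain_le:
  fixes x :: "nat \<Rightarrow> 'a :: order"
  assumes "\<forall>j\<in>{1..<k}. x j < x (Suc j)" "1 \<le> i" "i \<le> j" "j \<le> k"
  shows "x i \<le> x j"
  using chain_less[OF assms(1,2)] assms(3,4) by (cases "i = j") (auto intro: less_imp_le)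

lemma multiple_node_in_interior:
  fixes x :: "nat \<Rightarrow> real" and l :: "nat \<Rightarrow> nat"
  assumes I: "is_interval I" "\<forall>j\<in>{1..k}. x j \<in> I"
    and chain: "\<forall>j\<in>{1..<k}. x j < x (Suc j)"
    and first: "(\<forall>y\<in>I. x 1 \<le> y) \<longrightarrow> l 1 = 1" and last: "(\<forall>y\<in>I. y \<le> x k) \<longrightarrow> l k = 1"
    and j: "j \<in> {1..k}" "2 \<le> l j"
  shows "x j \<in> interior I"
proof -
  obtain u where "u \<in> I" "u < x j"
  proof (cases "j = 1")
    case True
    then show ?thesis using that first j by (auto simp: not_le)
  next
    case False
    then show ?thesis using that[of "x 1"] I(2) j chain_less[OF chain] by auto
  qed
  moreover obtain v where "v \<in> I" "x j < v"
  proof (cases "j = k")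
    case True
    then show ?thesis using that last j by (auto simp: not_le)
  next
    case False
    then show ?thesis using that[of "x k"] I(2) j chain_less[OF chain] by auto
  qed
  ultimately show ?thesis
    using mem_interior_is_interval[OF I(1)] by blast
qed

lemma sign_on_gaps:
  fixes x :: "nat \<Rightarrow> real" and d :: "real \<Rightarrow> real"
  assumes I: "is_interval I" "\<forall>j\<in>{1..k}. x j \<in> I"
    and chain: "\<forall>j\<in>{1..<k}. x j < x (Suc j)"
    and size: "(\<Sum>j=1..k. l j) = N"
    and sign: "\<forall>y\<in>I. 0 \<le> (\<Prod>b\<in>#(\<Sum>j\<in>{1..k}. replicate_mset (l j) (x j)). y - b) * d y"
  shows "\<forall>y\<in>I. y < x 1 \<longrightarrow> (-1) ^ N * d y \<ge> 0"
    and "\<forall>j\<in>{1..<k}. \<forall>y. x j < y \<and> y < x (Suc j) \<longrightarrow> (-1) ^ (N - (\<Sum>i=1..j. l i)) * d y \<ge> 0"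
    and "\<forall>y\<in>I. x k < y \<longrightarrow> d y \<ge> 0"
proof -
  have le: "x i \<le> x j" if "1 \<le> i" "i \<le> j" "j \<le> k" for i j
    using chain_le[OF chain that] .
  have gap: "0 \<le> (-1) ^ (\<Sum>i=Suc j..k. l i) * d y"
    if "y \<in> I" "j \<le> k" "\<forall>i\<in>{1..j}. x i < y" "\<forall>i\<in>{Suc j..k}. y < x i" for y j
    using sign_between_nodes[OF _ that(2-4)] sign that(1) by blast
  show "\<forall>y\<in>I. y < x 1 \<longrightarrow> (-1) ^ N * d y \<ge> 0"
  proof (intro ballI impI)
    fix y assume "y \<in> I" "y < x 1"
    then have "\<forall>i\<in>{1..k}. y < x i"
      using le[of 1] by (auto intro: less_le_trans)
    then show "(-1) ^ N * d y \<ge> 0"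
      using gap[of y 0] \<open>y \<in> I\<close> size by simp
  qed
  show "\<forall>y\<in>I. x k < y \<longrightarrow> d y \<ge> 0"
  proof (intro ballI impI)
    fix y assume "y \<in> I" "x k < y"
    then have "\<forall>i\<in>{1..k}. x i < y"
      using le[of _ k] by (meson atLeastAtMost_iff le_less_trans order_refl)
    then show "d y \<ge> 0"
      using gap[of y k] \<open>y \<in> I\<close> by simp
  qed
  show "\<forall>j\<in>{1..<k}. \<forall>y. x j < y \<and> y < x (Suc j) \<longrightarrow> (-1) ^ (N - (\<Sum>i=1..j. l i)) * d y \<ge> 0"
  proof (intro ballI allI impI)
    fix j y assume j: "j \<in> {1..<k}" and y: "x j < y \<and> y < x (Suc j)"
    have "y \<in> I"
      using mem_is_interval_1_I[OF I(1), of "x j" "x (Suc j)" y] I(2) j y by simp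
    moreover have "\<forall>i\<in>{1..j}. x i < y"
      using j y le[of _ j] by (meson atLeastAtMost_iff atLeastLessThan_iff le_less_trans less_imp_le)
    moreover have "\<forall>i\<in>{Suc j..k}. y < x i"
    proof
      fix i assume "i \<in> {Suc j..k}"
      then have "x (Suc j) \<le> x i" using le[of "Suc j" i] by simp
      then show "y < x i" using y by simp
    qed
    moreover have "N - (\<Sum>i=1..j. l i) = (\<Sum>i=Suc j..k. l i)"
      using sum_atLeastAtMost_split[of j k l] j size by simp
    ultimately show "(-1) ^ (N - (\<Sum>i=1..j. l i)) * d y \<ge> 0"
      using gap[of y j] j by simp
  qed
qed

theorem theorem1:
  fixes I :: "real set" and n k :: nat and f :: "real \<Rightarrow> real"
    and x :: "nat \<Rightarrow> real" and l :: "nat \<Rightarrow> nat"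
  assumes "is_interval I"
    and "n_convex n I f"
    and "k \<le> n"
    and "\<forall>j\<in>{1..k}. x j \<in> I"
    and "\<forall>j\<in>{1..<k}. x j < x (Suc j)"
    and "\<forall>j\<in>{1..k}. l j \<ge> 1"
    and "(\<Sum>j=1..k. l j) = n + 1"
    and "(\<forall>y\<in>I. x 1 \<le> y) \<longrightarrow> l 1 = 1"
    and "(\<forall>y\<in>I. y \<le> x k) \<longrightarrow> l k = 1"
  shows "\<exists>p :: real poly. degree p \<le> n
           \<and> (\<forall>j\<in>{1..k}. poly p (x j) = f (x j))
           \<and> (\<forall>y\<in>I. y < x 1 \<longrightarrow> (-1::real) ^ (n + 1) * (f y - poly p y) \<ge> 0)
           \<and> (\<forall>j\<in>{1..<k}. \<forall>y. x j < y \<and> y < x (Suc j) \<longrightarrow>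
                 (-1::real) ^ (n + 1 - (\<Sum>i=1..j. l i)) * (f y - poly p y) \<ge> 0)
           \<and> (\<forall>y\<in>I. x k < y \<longrightarrow> f y - poly p y \<ge> 0)"
proof -
  define M where "M = (\<Sum>j\<in>{1..k}. replicate_mset (l j) (x j))"
  have "inj_on x {1..k}"
    using chain_less[OF assms(5)] by (intro inj_onI) (metis atLeastAtMost_iff less_irrefl linorder_neqE_nat)
  then have count: "count M (x j) = l j" if "j \<in> {1..k}" for j
    unfolding M_def using that by (intro count_sum_replicate_mset) simp_all
  have set_M: "set_mset M = x ` {1..k}"
    using assms(6) by (fastforce simp: M_def set_mset_sum Suc_le_eq)
  have "\<forall>a\<in>#M. 2 \<le> count M a \<longrightarrow> a \<in> interior I"
    using multiple_node_in_interior[OF assms(1,4,5,8,9)] set_M count by auto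
  then obtain p where p: "degree p \<le> n" "\<forall>a\<in>#M. poly p a = f a"
    "\<forall>y\<in>I. 0 \<le> (\<Prod>a\<in>#M. y - a) * (f y - poly p y)"
    using n_convex_interpolant_sign[OF assms(2), of M] assms(4,7) set_M by (auto simp: M_def)
  then show ?thesis
    using sign_on_gaps[OF assms(1,4,5,7), of "\<lambda>y. f y - poly p y"] set_M
    unfolding M_def by auto
qed

end
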